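(* Let $S$ be the free semigroup on countably many generators, enumerated as $\vec{s}=(s_n)_{n\in\omega}$. Every very strongly productive ultrafilter on $S$ is multiplicatively isomorphic to an ordered union ultrafilter, and hence is sparse.
   Context: For a sequence $\vec{x}=(x_n)_{n\in\omega}$ in $S$, $\mathrm{FP}(\vec{x})$ is the set of products $\prod_{i\in a}x_i$ (increasing order of indices), $a$ a finite nonempty subset of $\omega$. A sequence $\vec{y}$ is a product subsystem of $\vec{x}$ if there are finite nonempty $a_n\subseteq\omega$ with $\max a_n<\min a_{n+1}$ and $y_n=\prod_{i\in a_n}x_i$ for all $n$. An ultrafilter $p$ on $S$ is very strongly productive if every $A\in p$ contains some $\mathrm{FP}(\vec{x})\in p$ with $\vec{x}$ a product subsystem of $\vec{s}$. $\mathbb{F}$ is the partial semigroup of finite nonempty subsets of $\omega$ with $ab=a\cup b$ defined iff $\max a<\min b$; an ordered union ultrafilter is an ultrafilter $\mathcal{U}$ on $\mathbb{F}$ such that every member contains some $\mathrm{FP}(\vec{b})\in\mathcal{U}$ for a sequence $\vec{b}$ in $\mathbb{F}$ with $\max b_i<\min b_{i+1}$. $p$ is multiplicatively isomorphic to an ordered union ultrafilter if for some sequence $\vec{x}$ in $S$ the map $f:\mathbb{F}\to\mathrm{FP}(\vec{x})$, $f(a)=\prod_{i\in a}x_i$, is injective and $\{f^{-1}[A]:A\in p\}$ is an ordered union ultrafilter. $p$ is sparse if for every $A\in p$ there are a sequence $\vec{x}$ in $S$ and a subsequence $\vec{y}=(x_{k_n})_n$ ($k_0<k_1<\cdots$)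 with $\mathrm{FP}(\vec{y})\in p$, $\mathrm{FP}(\vec{x})\subseteq A$, and $\{k_n:n\in\omega\}$ coinfinite in $\omega$. *)

theory Defs
  imports Main
begin

text \<open>Elements of S are nonempty words over the alphabet nat; the semigroup
operation is concatenation. The generators are the one-letter words s n = [n].\<close>

definition FS :: "nat list set" where
  "FS = {w. w \<noteq> []}"

definition gen :: "nat \<Rightarrow> nat list" where
  "gen n = [n]"

definition fprod :: "(nat \<Rightarrow> nat list) \<Rightarrow> nat set \<Rightarrow> nat list" where
  "fprod x a = concat (map x (sorted_list_of_set a))"

definition FinNE :: "nat set set" where
  "FinNE = {a. finite a \<and> a \<noteq> {}}"

definition FP :: "(nat \<Rightarrow> nat list) \<Rightarrow> nat list set" where
  "FP x = {fprod x a | a. a \<in> FinNE}"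

definition product_subsystem :: "(nat \<Rightarrow> nat list) \<Rightarrow> (nat \<Rightarrow> nat list) \<Rightarrow> bool" where
  "product_subsystem y x \<longleftrightarrow>
     (\<exists>a :: nat \<Rightarrow> nat set. (\<forall>n. a n \<in> FinNE \<and> Max (a n) < Min (a (Suc n)) \<and> y n = fprod x (a n)))"

definition ultrafilter_on :: "'a set \<Rightarrow> 'a set set \<Rightarrow> bool" where
  "ultrafilter_on X p \<longleftrightarrow>
     (\<forall>A\<in>p. A \<subseteq> X) \<and> X \<in> p \<and> {} \<notin> p \<and>
     (\<forall>A B. A \<in> p \<longrightarrow> B \<in> p \<longrightarrow> A \<inter> B \<in> p) \<and>
     (\<forall>A B. A \<in> p \<longrightarrow> A \<subseteq> B \<longrightarrow> B \<subseteq> X \<longrightarrow> B \<in> p) \<and>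
     (\<forall>A. A \<subseteq> X \<longrightarrow> A \<in> p \<or> X - A \<in> p)"

definition very_strongly_productive :: "nat list set set \<Rightarrow> bool" where
  "very_strongly_productive p \<longleftrightarrow> ultrafilter_on FS p \<and>
     (\<forall>A\<in>p. \<exists>x. product_subsystem x gen \<and> FP x \<subseteq> A \<and> FP x \<in> p)"

text \<open>FP in the partial semigroup F: unions of b_i over finite nonempty index sets
(the products are defined since the b_i are ordered).\<close>
definition FU :: "(nat \<Rightarrow> nat set) \<Rightarrow> nat set set" where
  "FU b = {(\<Union>i\<in>a. b i) | a. a \<in> FinNE}"

definition ordered_union_ultrafilter :: "nat set set set \<Rightarrow> bool" where
  "ordered_union_ultrafilter U \<longleftrightarrow> ultrafilter_on FinNE U \<and>
     (\<forall>A\<in>U. \<exists>b. (\<forall>i. b i \<in> FinNE \<and> Max (b i) < Min (b (Suc i))) \<and> FU b \<subseteq> A \<and> FU b \<in> U)"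

definition mult_iso_ordered_union :: "nat list set set \<Rightarrow> bool" where
  "mult_iso_ordered_union p \<longleftrightarrow>
     (\<exists>x. (\<forall>n. x n \<in> FS) \<and> inj_on (fprod x) FinNE \<and>
        ordered_union_ultrafilter ((\<lambda>A. {a \<in> FinNE. fprod x a \<in> A}) ` p))"

definition sparse :: "nat list set set \<Rightarrow> bool" where
  "sparse p \<longleftrightarrow>
     (\<forall>A\<in>p. \<exists>x k. (\<forall>n. x n \<in> FS) \<and> strict_mono k \<and> FP (x \<circ> k) \<in> p \<and> FP x \<subseteq> A \<and>
        infinite (UNIV - range k))"

end

theory Submission
  imports Defs
begin

(* Since fprod gen is sorted_list_of_set, a very strongly productive ultrafilter p is,
   via this injection, the image of an ultrafilter U on FinNE, and product subsystems of
   the generators correspond to ordered sequences of blocks; so U is an ordered union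
   ultrafilter.  For sparseness, colour a union of blocks by the parity of the number of
   runs of consecutive block indices it uses.  A homogeneous FU d in U must have even
   colour, and no two consecutive blocks of d can use adjacent indices, since merging two
   adjacent runs would change the parity.  The unused blocks between them supply the
   missing terms of a sequence of which d is a subsequence. *)

definition ordered_blocks :: "(nat \<Rightarrow> nat set) \<Rightarrow> bool" where
  "ordered_blocks b \<longleftrightarrow> (\<forall>n. b n \<in> FinNE \<and> Max (b n) < Min (b (Suc n)))"

lemma fprod_gen: "fprod gen = sorted_list_of_set"
proof
  fix a
  have "concat (map (\<lambda>n. [n]) xs) = xs" for xs :: "nat list"
    by (induction xs) auto
  moreover have "gen = (\<lambda>n. [n])"
    by (simp add: fun_eq_iff gen_def)
  ultimately show "fprod gen a = sorted_list_of_set a"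
    by (simp add: fprod_def)
qed

lemma inj_on_sorted_list_of_set_FinNE: "inj_on sorted_list_of_set FinNE"
  by (auto simp: inj_on_def FinNE_def dest: sorted_list_of_set_inject)

lemma sorted_list_of_set_in_FS: "a \<in> FinNE \<Longrightarrow> sorted_list_of_set a \<in> FS"
  by (auto simp: FinNE_def FS_def)

lemma ordered_blocks_finite: "ordered_blocks b \<Longrightarrow> finite (b n)"
  and ordered_blocks_nonempty: "ordered_blocks b \<Longrightarrow> b n \<noteq> {}"
  by (auto simp: ordered_blocks_def FinNE_def)

lemma ordered_blocks_less:
  assumes b: "ordered_blocks b" and "i < j" "u \<in> b i" "v \<in> b j"
  shows "u < v"
  using \<open>i < j\<close> \<open>v \<in> b j\<close>
proof (induction j arbitrary: v)
  case 0
  then show ?case by simp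
next
  case (Suc j)
  have fin: "finite (b k)" "b k \<noteq> {}" for k
    using ordered_blocks_finite[OF b] ordered_blocks_nonempty[OF b] by auto
  have "u \<le> Max (b j)"
  proof (cases "i = j")
    case False
    with Suc.prems have "i < j" by simp
    with fin show ?thesis
      using Suc.IH[of "Max (b j)"] by (simp add: less_imp_le)
  qed (use fin \<open>u \<in> b i\<close> in simp)
  also have "Max (b j) < Min (b (Suc j))"
    using b by (simp add: ordered_blocks_def)
  also have "\<dots> \<le> v"
    using fin Suc.prems by simp
  finally show ?case .
qed

lemma ordered_blocksI:
  assumes "\<And>n. b n \<in> FinNE" and "\<And>n u v. u \<in> b n \<Longrightarrow> v \<in> b (Suc n) \<Longrightarrow> u < v"
  shows "ordered_blocks b"
  using assms by (auto simp: ordered_blocks_def FinNE_def)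

lemma FU_subset_FinNE: "ordered_blocks b \<Longrightarrow> FU b \<subseteq> FinNE"
  by (auto simp: FU_def FinNE_def ordered_blocks_finite ordered_blocks_nonempty)

lemma sorted_list_of_set_Un_less:
  fixes A B :: "'a::linorder set"
  assumes "finite A" "finite B" "\<forall>a\<in>A. \<forall>c\<in>B. a < c"
  shows "sorted_list_of_set (A \<union> B) = sorted_list_of_set A @ sorted_list_of_set B"
  using assms
  by (intro sorted_distinct_set_unique) (auto simp: sorted_append intro: less_imp_le)

lemma fprod_ordered_blocks:
  assumes b: "ordered_blocks b" and "c \<in> FinNE"
  shows "fprod (\<lambda>n. sorted_list_of_set (b n)) c = sorted_list_of_set (\<Union>i\<in>c. b i)"
proof -
  have "concat (map (\<lambda>i. sorted_list_of_set (b i)) xs) = sorted_list_of_set (\<Union>i\<in>set xs. b i)"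
    if "sorted_wrt (<) xs" for xs
    using that
  proof (induction xs)
    case (Cons x xs)
    have "sorted_list_of_set (b x \<union> (\<Union>i\<in>set xs. b i))
          = sorted_list_of_set (b x) @ sorted_list_of_set (\<Union>i\<in>set xs. b i)"
      using Cons.prems ordered_blocks_finite[OF b] ordered_blocks_less[OF b]
      by (intro sorted_list_of_set_Un_less) auto
    with Cons show ?case by simp
  qed simp
  with \<open>c \<in> FinNE\<close> show ?thesis
    by (simp add: fprod_def FinNE_def)
qed

lemma FP_ordered_blocks:
  "ordered_blocks b \<Longrightarrow> FP (\<lambda>n. sorted_list_of_set (b n)) = sorted_list_of_set ` FU b"
  by (simp add: FP_def FU_def Setcompr_eq_image image_image fprod_ordered_blocks cong: image_cong)

lemma blocks_covered_by_Union:
  assumes b: "ordered_blocks b"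
  shows "{i. b i \<subseteq> (\<Union>k\<in>e. b k)} = e"
proof (intro equalityI subsetI)
  fix j assume "j \<in> {i. b i \<subseteq> (\<Union>k\<in>e. b k)}"
  moreover obtain v where "v \<in> b j"
    using ordered_blocks_nonempty[OF b] by blast
  ultimately obtain k where "k \<in> e" "v \<in> b k" by blast
  with \<open>v \<in> b j\<close> have "k = j"
    using ordered_blocks_less[OF b, of k j v v] ordered_blocks_less[OF b, of j k v v]
    by (cases k j rule: linorder_cases) auto
  with \<open>k \<in> e\<close> show "j \<in> e" by simp
qed auto

text \<open>Its cardinality is the number of maximal runs of consecutive integers in e.\<close>
definition run_ends :: "nat set \<Rightarrow> nat set" where
  "run_ends e = {i \<in> e. Suc i \<notin> e}"

lemma finite_run_ends: "finite e \<Longrightarrow> finite (run_ends e)"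
  by (simp add: run_ends_def)

lemma card_run_ends_Un_gap:
  assumes "finite e" "finite e'" "e' \<noteq> {}" "\<forall>i\<in>e. \<forall>j\<in>e'. i < j"
    and gap: "Suc (Max e) < Min e'"
  shows "card (run_ends (e \<union> e')) = card (run_ends e) + card (run_ends e')"
proof -
  have "Suc i \<notin> e'" if "i \<in> e" for i
    using that gap assms(1,2) Max_ge[of e i] Min_le[of e'] by fastforce
  moreover have "Suc j \<notin> e" if "j \<in> e'" for j
    using that assms(4) by force
  ultimately have "run_ends (e \<union> e') = run_ends e \<union> run_ends e'"
    by (auto simp: run_ends_def)
  moreover have "run_ends e \<inter> run_ends e' = {}"
    using assms(4) by (auto simp: run_ends_def)
  ultimately show ?thesis
    using assms(1,2) by (simp add: card_Un_disjoint finite_run_ends)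
qed

lemma card_run_ends_Un_adjacent:
  assumes "finite e" "finite e'" "e \<noteq> {}" "e' \<noteq> {}" "\<forall>i\<in>e. \<forall>j\<in>e'. i < j"
    and adjacent: "Suc (Max e) = Min e'"
  shows "card (run_ends (e \<union> e')) + 1 = card (run_ends e) + card (run_ends e')"
proof -
  have Max_in: "Max e \<in> run_ends e"
    using assms(1,3) by (auto simp: run_ends_def dest: Max_ge[of e "Suc (Max e)"])
  have "Suc i \<in> e' \<longleftrightarrow> i = Max e" if "i \<in> e" for i
  proof
    assume "Suc i \<in> e'"
    then have "Min e' \<le> Suc i" using assms(2) by simp
    with adjacent that assms(1) show "i = Max e" by (simp add: le_antisym)
  qed (use adjacent Min_in[OF assms(2,4)] in simp)
  moreover have "Suc j \<notin> e" if "j \<in> e'" for j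
    using that assms(5) by force
  ultimately have "run_ends (e \<union> e') = (run_ends e - {Max e}) \<union> run_ends e'"
    by (auto simp: run_ends_def)
  moreover have "(run_ends e - {Max e}) \<inter> run_ends e' = {}"
    using assms(5) by (auto simp: run_ends_def)
  ultimately have "card (run_ends (e \<union> e')) = card (run_ends e - {Max e}) + card (run_ends e')"
    using assms(1,2) by (simp add: card_Un_disjoint finite_run_ends)
  moreover have "card (run_ends e - {Max e}) + 1 = card (run_ends e)"
    using Max_in assms(1) card_Suc_Diff1[OF finite_run_ends] by fastforce
  ultimately show ?thesis by simp
qed

lemma run_ends_parity_constant_imp_gaps:
  assumes e: "ordered_blocks e" and r: "\<And>i j. even (card (run_ends (e i \<union> e j))) = r"
  shows "Suc (Max (e n)) < Min (e (Suc n))"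
proof -
  have fin: "finite (e k)" "e k \<noteq> {}" for k
    using ordered_blocks_finite[OF e] ordered_blocks_nonempty[OF e] by auto
  have sep: "\<forall>u\<in>e i. \<forall>v\<in>e j. u < v" if "i < j" for i j
    using ordered_blocks_less[OF e that] by blast
  have step: "Max (e k) < Min (e (Suc k))" for k
    using e by (simp add: ordered_blocks_def)
  have single: "even (card (run_ends (e i))) = r" for i
    using r[of i i] by simp
  have "Suc (Max (e 0)) < Min (e 2)"
    using step[of 0] step[of 1] Min_le[OF fin(1) Max_in[OF fin], of 1] by (simp add: numeral_2_eq_2)
  then have "card (run_ends (e 0 \<union> e 2)) = card (run_ends (e 0)) + card (run_ends (e 2))"
    using fin sep[of 0 2] by (intro card_run_ends_Un_gap) auto
  then have "r"
    using r[of 0 2] single[of 0] single[of 2] by auto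
  show ?thesis
  proof (rule ccontr)
    assume "\<not> ?thesis"
    with step[of n] have "Suc (Max (e n)) = Min (e (Suc n))" by simp
    then have "card (run_ends (e n \<union> e (Suc n))) + 1
               = card (run_ends (e n)) + card (run_ends (e (Suc n)))"
      using fin sep[of n "Suc n"] by (intro card_run_ends_Un_adjacent) auto
    with \<open>r\<close> r[of n "Suc n"] single[of n] single[of "Suc n"] show False
      by presburger
  qed
qed

lemma ordered_blocks_condensation:
  assumes b: "ordered_blocks b" and d: "ordered_blocks d" and db: "\<And>n. d n \<in> FU b"
  obtains e where "ordered_blocks e" "\<And>n. d n = (\<Union>i\<in>e n. b i)"
proof -
  have "\<forall>n. \<exists>a. a \<in> FinNE \<and> d n = (\<Union>i\<in>a. b i)"
    using db unfolding FU_def by blast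
  from choice[OF this] obtain e where e: "\<And>n. e n \<in> FinNE" "\<And>n. d n = (\<Union>i\<in>e n. b i)"
    by blast
  have "ordered_blocks e"
  proof (rule ordered_blocksI)
    fix n u v assume uv: "u \<in> e n" "v \<in> e (Suc n)"
    have fin: "finite (b k)" "b k \<noteq> {}" for k
      using ordered_blocks_finite[OF b] ordered_blocks_nonempty[OF b] by auto
    have "Max (b u) \<in> d n" "Min (b v) \<in> d (Suc n)"
      using uv Max_in[OF fin] Min_in[OF fin] e(2)[of n] e(2)[of "Suc n"] by auto
    then have "Max (b u) < Min (b v)"
      using ordered_blocks_less[OF d, of n "Suc n"] by simp
    moreover have "Min (b v) \<le> Max (b u)" if "v \<le> u"
      using that fin ordered_blocks_less[OF b, of v u "Min (b v)" "Max (b u)"]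
      by (cases "v = u") (auto simp: Min_le_iff intro: less_imp_le)
    ultimately show "u < v"
      by (meson not_le order.strict_trans1 less_irrefl)
  qed (rule e(1))
  then show thesis using e(2) by (rule that)
qed

definition interleave_gaps :: "(nat \<Rightarrow> nat set) \<Rightarrow> nat \<Rightarrow> nat set" where
  "interleave_gaps e m = (if even m then e (m div 2) else {Suc (Max (e (m div 2)))})"

lemma ordered_blocks_interleave_gaps:
  assumes e: "ordered_blocks e" and gaps: "\<And>n. Suc (Max (e n)) < Min (e (Suc n))"
  shows "ordered_blocks (interleave_gaps e)"
proof (rule ordered_blocksI)
  show "interleave_gaps e n \<in> FinNE" for n
    using e by (simp add: interleave_gaps_def ordered_blocks_def FinNE_def)
  fix n u v assume uv: "u \<in> interleave_gaps e n" "v \<in> interleave_gaps e (Suc n)"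
  have fin: "finite (e k)" for k
    using ordered_blocks_finite[OF e] .
  show "u < v"
  proof (cases "even n")
    case True
    with uv fin show ?thesis
      by (auto simp: interleave_gaps_def le_imp_less_Suc)
  next
    case False
    then have "Suc n div 2 = Suc (n div 2)" by presburger
    with False uv have "u = Suc (Max (e (n div 2)))" "v \<in> e (Suc (n div 2))"
      by (simp_all add: interleave_gaps_def)
    with gaps[of "n div 2"] Min_le[OF fin, of v "Suc (n div 2)"] show ?thesis
      by simp
  qed
qed

lemma ordered_blocks_Union:
  assumes b: "ordered_blocks b" and g: "ordered_blocks g"
  shows "ordered_blocks (\<lambda>m. \<Union>i\<in>g m. b i)"
proof (rule ordered_blocksI)
  show "(\<Union>i\<in>g n. b i) \<in> FinNE" for n
    using g ordered_blocks_finite[OF b] ordered_blocks_nonempty[OF b]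
    by (auto simp: ordered_blocks_def FinNE_def)
  fix n u v assume "u \<in> (\<Union>i\<in>g n. b i)" "v \<in> (\<Union>i\<in>g (Suc n). b i)"
  then obtain i j where "i \<in> g n" "u \<in> b i" "j \<in> g (Suc n)" "v \<in> b j"
    by blast
  then show "u < v"
    using ordered_blocks_less[OF g, of n "Suc n" i j] ordered_blocks_less[OF b, of i j u v] by simp
qed

lemma FU_Union_subset:
  assumes "ordered_blocks g"
  shows "FU (\<lambda>m. \<Union>i\<in>g m. b i) \<subseteq> FU b"
proof
  fix c assume "c \<in> FU (\<lambda>m. \<Union>i\<in>g m. b i)"
  then obtain a where a: "a \<in> FinNE" "c = (\<Union>m\<in>a. \<Union>i\<in>g m. b i)"
    by (auto simp: FU_def)
  have "(\<Union>m\<in>a. g m) \<in> FinNE"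
    using a(1) assms by (auto simp: FinNE_def ordered_blocks_def)
  moreover have "c = (\<Union>i\<in>(\<Union>m\<in>a. g m). b i)"
    using a(2) by blast
  ultimately show "c \<in> FU b"
    unfolding FU_def by blast
qed

lemma infinite_UNIV_minus_range_double: "infinite (UNIV - range (\<lambda>n::nat. 2 * n))"
proof -
  have "range (\<lambda>n::nat. 2 * n + 1) \<subseteq> UNIV - range (\<lambda>n. 2 * n)"
    by auto presburger
  moreover have "inj (\<lambda>n::nat. 2 * n + 1)"
    by (simp add: inj_def)
  ultimately show ?thesis
    using infinite_iff_countable_subset by blast
qed

lemma
  assumes "ultrafilter_on X p"
  shows ultrafilter_on_subset: "A \<in> p \<Longrightarrow> A \<subseteq> X"
    and ultrafilter_on_carrier: "X \<in> p"
    and ultrafilter_on_empty: "{} \<notin> p"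
    and ultrafilter_on_Int: "A \<in> p \<Longrightarrow> B \<in> p \<Longrightarrow> A \<inter> B \<in> p"
    and ultrafilter_on_superset: "A \<in> p \<Longrightarrow> A \<subseteq> B \<Longrightarrow> B \<subseteq> X \<Longrightarrow> B \<in> p"
    and ultrafilter_on_compl: "A \<subseteq> X \<Longrightarrow> A \<in> p \<or> X - A \<in> p"
  using assms unfolding ultrafilter_on_def by (elim conjE; metis)+

lemma ultrafilter_on_homogeneous:
  fixes P :: "'a \<Rightarrow> bool"
  assumes p: "ultrafilter_on X p" and "A \<in> p"
  obtains r where "{a \<in> A. P a = r} \<in> p"
proof (cases "{a \<in> A. P a} \<in> p")
  case True
  then show thesis by (intro that[of True]) simp
next
  case False
  have "A \<subseteq> X"
    using p \<open>A \<in> p\<close> by (rule ultrafilter_on_subset)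
  then have "X - {a \<in> A. P a} \<in> p"
    using False ultrafilter_on_compl[OF p, of "{a \<in> A. P a}"] by blast
  then have "A \<inter> (X - {a \<in> A. P a}) \<in> p"
    using p \<open>A \<in> p\<close> by (simp add: ultrafilter_on_Int)
  moreover have "A \<inter> (X - {a \<in> A. P a}) = {a \<in> A. P a = False}"
    using \<open>A \<subseteq> X\<close> by blast
  ultimately show thesis by (intro that[of False]) simp
qed

definition pullback_filter :: "('a \<Rightarrow> 'b) \<Rightarrow> 'a set \<Rightarrow> 'b set set \<Rightarrow> 'a set set" where
  "pullback_filter f X p = (\<lambda>A. {a \<in> X. f a \<in> A}) ` p"

lemma mem_pullback_filter_iff:
  assumes p: "ultrafilter_on Y p" and f: "inj_on f X" "f ` X \<in> p"
  shows "B \<in> pullback_filter f X p \<longleftrightarrow> B \<subseteq> X \<and> f ` B \<in> p"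
proof
  assume "B \<in> pullback_filter f X p"
  then obtain A where A: "A \<in> p" "B = {a \<in> X. f a \<in> A}"
    by (auto simp: pullback_filter_def)
  have "A \<inter> f ` X \<in> p"
    using p A(1) f(2) by (rule ultrafilter_on_Int)
  moreover have "A \<inter> f ` X \<subseteq> f ` B" "f ` B \<subseteq> Y"
    using A(2) ultrafilter_on_subset[OF p f(2)] by auto
  ultimately show "B \<subseteq> X \<and> f ` B \<in> p"
    using A(2) ultrafilter_on_superset[OF p] by blast
next
  assume B: "B \<subseteq> X \<and> f ` B \<in> p"
  then have "B = {a \<in> X. f a \<in> f ` B}"
    using f(1) by (auto dest: inj_onD)
  with B show "B \<in> pullback_filter f X p"
    by (auto simp: pullback_filter_def)
qed

lemma ultrafilter_on_pullback_filter:
  assumes p: "ultrafilter_on Y p" and f: "inj_on f X" "f ` X \<in> p"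
  shows "ultrafilter_on X (pullback_filter f X p)"
proof -
  note mem = mem_pullback_filter_iff[OF assms]
  have fY: "f ` B \<subseteq> Y" if "B \<subseteq> X" for B
    using that ultrafilter_on_subset[OF p f(2)] by blast
  have Int: "f ` (A \<inter> B) = f ` A \<inter> f ` B" if "A \<subseteq> X" "B \<subseteq> X" for A B
    using inj_on_image_Int[OF f(1) that] .
  have compl: "f ` (X - A) \<in> p \<or> f ` A \<in> p" if "A \<subseteq> X" for A
  proof (rule disjCI)
    assume "f ` A \<notin> p"
    then have "Y - f ` A \<in> p"
      using ultrafilter_on_compl[OF p fY[OF that]] by simp
    then have "(Y - f ` A) \<inter> f ` X \<in> p"
      by (rule ultrafilter_on_Int[OF p _ f(2)])
    moreover have "(Y - f ` A) \<inter> f ` X \<subseteq> f ` (X - A)"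
      by blast
    ultimately show "f ` (X - A) \<in> p"
      using ultrafilter_on_superset[OF p] fY[of "X - A"] by blast
  qed
  have superset: "f ` B \<in> p" if "f ` A \<in> p" "A \<subseteq> B" "B \<subseteq> X" for A B
    using ultrafilter_on_superset[OF p that(1) image_mono[OF that(2)] fY[OF that(3)]] .
  show ?thesis
    unfolding ultrafilter_on_def mem
    using f(2) ultrafilter_on_empty[OF p] Int ultrafilter_on_Int[OF p] superset
    by (intro conjI allI impI ballI) (auto simp: mem dest: compl)
qed

lemma ordered_union_ultrafilter_gapped_blocks:
  assumes U: "ordered_union_ultrafilter U" and b: "ordered_blocks b" and "FU b \<in> U"
  obtains d e where "ordered_blocks d" "FU d \<in> U"
    "ordered_blocks e" "\<And>n. d n = (\<Union>i\<in>e n. b i)" "\<And>n. Suc (Max (e n)) < Min (e (Suc n))"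
proof -
  have uf: "ultrafilter_on FinNE U"
    using U by (simp add: ordered_union_ultrafilter_def)
  obtain r where "{c \<in> FU b. even (card (run_ends {i. b i \<subseteq> c})) = r} \<in> U"
    (is "?C \<in> U")
    by (rule ultrafilter_on_homogeneous[OF uf \<open>FU b \<in> U\<close>,
          where P = "\<lambda>c. even (card (run_ends {i. b i \<subseteq> c}))"])
  then obtain d where d: "ordered_blocks d" "FU d \<subseteq> ?C" "FU d \<in> U"
    using U unfolding ordered_union_ultrafilter_def ordered_blocks_def by blast
  have union_in_FU: "d i \<union> d j \<in> FU d" for i j
  proof -
    have "d i \<union> d j = (\<Union>k\<in>{i, j}. d k)" by auto
    then show ?thesis
      unfolding FU_def FinNE_def by blast
  qed
  then have "d n \<in> FU b" for n
    using d(2) union_in_FU[of n n] by auto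
  then obtain e where e: "ordered_blocks e" "\<And>n. d n = (\<Union>i\<in>e n. b i)"
    using ordered_blocks_condensation[OF b d(1)] by blast
  have "{k. b k \<subseteq> d i \<union> d j} = e i \<union> e j" for i j
    using blocks_covered_by_Union[OF b, of "e i \<union> e j"] e(2)[of i] e(2)[of j] by simp
  then have "even (card (run_ends (e i \<union> e j))) = r" for i j
    using d(2) union_in_FU[of i j] by auto
  then have "Suc (Max (e n)) < Min (e (Suc n))" for n
    using run_ends_parity_constant_imp_gaps[OF e(1)] by blast
  then show thesis
    using that d(1,3) e by blast
qed

context
  fixes p :: "nat list set set"
  assumes vsp: "very_strongly_productive p"
begin

lemma vsp_ultrafilter: "ultrafilter_on FS p"
  using vsp by (simp add: very_strongly_productive_def)

lemma vsp_ordered_blocks: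
  assumes "A \<in> p"
  obtains b where "ordered_blocks b" "sorted_list_of_set ` FU b \<subseteq> A" "sorted_list_of_set ` FU b \<in> p"
proof -
  obtain x where x: "product_subsystem x gen" "FP x \<subseteq> A" "FP x \<in> p"
    using vsp assms by (auto simp: very_strongly_productive_def)
  then obtain b where b: "ordered_blocks b" "\<And>n. x n = sorted_list_of_set (b n)"
    unfolding product_subsystem_def ordered_blocks_def fprod_gen by blast
  then have "FP x = sorted_list_of_set ` FU b"
    using FP_ordered_blocks[OF b(1)] by (metis ext)
  with b(1) x(2,3) show thesis
    by (intro that) auto
qed

lemma vsp_sorted_lists_in: "sorted_list_of_set ` FinNE \<in> p"
proof -
  obtain b where "ordered_blocks b" "sorted_list_of_set ` FU b \<in> p"
    using vsp_ordered_blocks[OF ultrafilter_on_carrier[OF vsp_ultrafilter]] by blast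
  moreover have "sorted_list_of_set ` FinNE \<subseteq> FS"
    using sorted_list_of_set_in_FS by blast
  ultimately show ?thesis
    using ultrafilter_on_superset[OF vsp_ultrafilter] FU_subset_FinNE image_mono by metis
qed

lemmas mem_vsp_pullback_iff =
  mem_pullback_filter_iff[OF vsp_ultrafilter inj_on_sorted_list_of_set_FinNE vsp_sorted_lists_in]

lemma vsp_pullback_ordered_union:
  "ordered_union_ultrafilter (pullback_filter sorted_list_of_set FinNE p)"
  unfolding ordered_union_ultrafilter_def
proof (intro conjI ballI)
  show "ultrafilter_on FinNE (pullback_filter sorted_list_of_set FinNE p)"
    using ultrafilter_on_pullback_filter[OF vsp_ultrafilter inj_on_sorted_list_of_set_FinNE
        vsp_sorted_lists_in] .
  fix B assume "B \<in> pullback_filter sorted_list_of_set FinNE p"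
  then have B: "B \<subseteq> FinNE" "sorted_list_of_set ` B \<in> p"
    by (simp_all add: mem_vsp_pullback_iff)
  obtain b where b: "ordered_blocks b" "sorted_list_of_set ` FU b \<subseteq> sorted_list_of_set ` B"
    "sorted_list_of_set ` FU b \<in> p"
    by (rule vsp_ordered_blocks[OF B(2)])
  have "FU b \<subseteq> B"
    using b(2) inj_on_image_mem_iff[OF inj_on_sorted_list_of_set_FinNE _ B(1)]
      FU_subset_FinNE[OF b(1)] by blast
  moreover have "FU b \<in> pullback_filter sorted_list_of_set FinNE p"
    using b(3) FU_subset_FinNE[OF b(1)] by (simp add: mem_vsp_pullback_iff)
  ultimately show "\<exists>b. (\<forall>i. b i \<in> FinNE \<and> Max (b i) < Min (b (Suc i))) \<and> FU b \<subseteq> B \<and>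
      FU b \<in> pullback_filter sorted_list_of_set FinNE p"
    using b(1) unfolding ordered_blocks_def by blast
qed

lemma vsp_mult_iso_ordered_union: "mult_iso_ordered_union p"
  unfolding mult_iso_ordered_union_def
proof (intro exI conjI)
  show "\<forall>n. gen n \<in> FS"
    by (simp add: gen_def FS_def)
  show "inj_on (fprod gen) FinNE"
    by (simp add: fprod_gen inj_on_sorted_list_of_set_FinNE)
  show "ordered_union_ultrafilter ((\<lambda>A. {a \<in> FinNE. fprod gen a \<in> A}) ` p)"
    using vsp_pullback_ordered_union by (simp add: pullback_filter_def fprod_gen)
qed

lemma vsp_sparse: "sparse p"
  unfolding sparse_def
proof
  fix A assume "A \<in> p"
  then obtain b where b: "ordered_blocks b" "sorted_list_of_set ` FU b \<subseteq> A"
    "sorted_list_of_set ` FU b \<in> p"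
    by (rule vsp_ordered_blocks)
  have "FU b \<in> pullback_filter sorted_list_of_set FinNE p"
    using b(3) FU_subset_FinNE[OF b(1)] by (simp add: mem_vsp_pullback_iff)
  then obtain d e where d: "ordered_blocks d" "FU d \<in> pullback_filter sorted_list_of_set FinNE p"
    and e: "ordered_blocks e" "\<And>n. d n = (\<Union>i\<in>e n. b i)"
    and gaps: "\<And>n. Suc (Max (e n)) < Min (e (Suc n))"
    using ordered_union_ultrafilter_gapped_blocks[OF vsp_pullback_ordered_union b(1)] by blast
  define g where "g = interleave_gaps e"
  define x where "x m = sorted_list_of_set (\<Union>i\<in>g m. b i)" for m
  have g: "ordered_blocks g"
    unfolding g_def using e(1) gaps by (rule ordered_blocks_interleave_gaps)
  have "x \<circ> (\<lambda>n. 2 * n) = (\<lambda>n. sorted_list_of_set (d n))"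
    by (simp add: fun_eq_iff x_def g_def interleave_gaps_def e(2))
  then have "FP (x \<circ> (\<lambda>n. 2 * n)) \<in> p"
    using FP_ordered_blocks[OF d(1)] d(2) by (simp add: mem_vsp_pullback_iff)
  moreover have "FP x \<subseteq> A"
    using FP_ordered_blocks[OF ordered_blocks_Union[OF b(1) g]] FU_Union_subset[OF g, of b] b(2)
    unfolding x_def by blast
  moreover have "\<forall>n. x n \<in> FS"
    using ordered_blocks_Union[OF b(1) g] by (simp add: x_def ordered_blocks_def sorted_list_of_set_in_FS)
  moreover have "strict_mono (\<lambda>n::nat. 2 * n)"
    by (simp add: strict_mono_def)
  ultimately show "\<exists>x k. (\<forall>n. x n \<in> FS) \<and> strict_mono k \<and> FP (x \<circ> k) \<in> p \<and> FP x \<subseteq> A \<and>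
      infinite (UNIV - range k)"
    using infinite_UNIV_minus_range_double by blast
qed

end

theorem mainTheorem17:
  fixes p :: "nat list set set"
  assumes "very_strongly_productive p"
  shows "mult_iso_ordered_union p \<and> sparse p"
  using vsp_mult_iso_ordered_union[OF assms] vsp_sparse[OF assms] ..

end
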